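(* Let $\Gamma_M$ ($M>0$) be a family of nonatomic routing games with a single OD pair, sharing the same graph, path set $\mathcal P$ and edge cost functions $(c_e)_{e\in\mathcal E}$, where $M$ is the traffic demand of the OD pair. Suppose there is a function $c:(0,\infty)\to(0,\infty)$, regularly varying at $\infty$, which is a benchmark for $(c_e)_{e\in\mathcal E}$ at $\infty$, and that the network is tight relative to $c$ at $\infty$, i.e. $0<\alpha<\infty$ where $\alpha=\min_{p\in\mathcal P}\max_{e\in p}\alpha_e$ and $\alpha_e=\lim_{x\to \infty}c_e(x)/c(x)$. Then $\lim_{M\to \infty}\mathrm{PoA}(\Gamma_M)=1$.
   Context: A nonatomic routing game consists of: a finite directed multigraph with edge set $\mathcal E$; a finite set $\mathcal I$ of origin–destination (OD) pairs, each $i\in\mathcal I$ with a demand $m^i\ge 0$ and a nonempty finite set $\mathcal P^i$ of paths from its origin to its destination, the sets $\mathcal P^i$ pairwise disjoint, $\mathcal P=\bigcup_i\mathcal P^i$; and for each edge $e$ a continuous nondecreasing cost function $c_e:[0,\infty)\to[0,\infty)$. The total inflow is $M=\sum_i m^i>0$. A feasible flow is $f\in\mathbb R_+^{\mathcal P}$ with $\sum_{p\in\mathcal P^i}f_p=m^i$ for all $i$; it induces loads $x_e=\sum_{p\ni e}f_p$ and path costs $c_p(f)=\sum_{e\in p}c_e(x_e)$. A Wardrop equilibrium is a feasible flow $f^*$ with $c_p(f^* )\le c_{p'}(f^* )$ for all $i$ and all $p,p'\in\mathcal P^i$ with $f^*_p>0$. The social cost is $L(x)=\sum_e x_e c_e(x_e)$;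 $\mathrm{Opt}(\Gamma)$ is its minimum over loads induced by feasible flows, $\mathrm{Eq}(\Gamma)=L(x^* )$ for the load of a Wardrop equilibrium (all equilibria have the same social cost), and $\mathrm{PoA}(\Gamma)=\mathrm{Eq}(\Gamma)/\mathrm{Opt}(\Gamma)$; it is assumed throughout that $\mathrm{Opt}(\Gamma)>0$ (if $\mathrm{Opt}=0$ one sets $\mathrm{PoA}=1$). For $\omega\in\{0,\infty\}$, $g:(0,\infty)\to(0,\infty)$ is regularly varying at $\omega$ if $\lim_{t\to\omega}g(tx)/g(t)$ exists and is finite and nonzero for every $x>0$. A function $c$ regularly varying at $\omega$ is a benchmark for the costs $(c_e)$ at $\omega$ if the limit $\alpha_e=\lim_{x\to\omega}c_e(x)/c(x)\in[0,\infty]$ exists for every edge $e$. *)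

theory Defs
  imports "HOL-Analysis.Analysis"
begin

text \<open>Directed multigraph: edges of type 'e (finite edge set E), each edge e goes from
  vertex src e to vertex trg e.  A path is a list of edges.\<close>

fun is_walk :: "('e \<Rightarrow> 'v) \<Rightarrow> ('e \<Rightarrow> 'v) \<Rightarrow> 'v \<Rightarrow> 'e list \<Rightarrow> 'v \<Rightarrow> bool" where
  "is_walk src trg u [] v = (u = v)"
| "is_walk src trg u (e # es) v = (src e = u \<and> is_walk src trg (trg e) es v)"

definition simple_path :: "'e set \<Rightarrow> ('e \<Rightarrow> 'v) \<Rightarrow> ('e \<Rightarrow> 'v) \<Rightarrow> 'v \<Rightarrow> 'v \<Rightarrow> 'e list \<Rightarrow> bool" where
  "simple_path E src trg u v p \<longleftrightarrow>
     set p \<subseteq> E \<and> is_walk src trg u p v \<and> distinct (u # map trg p)"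

text \<open>Single OD pair with path set P and demand M.\<close>
definition feasible :: "'e list set \<Rightarrow> real \<Rightarrow> ('e list \<Rightarrow> real) \<Rightarrow> bool" where
  "feasible P M f \<longleftrightarrow> (\<forall>p\<in>P. 0 \<le> f p) \<and> (\<Sum>p\<in>P. f p) = M"

definition load :: "'e list set \<Rightarrow> ('e list \<Rightarrow> real) \<Rightarrow> 'e \<Rightarrow> real" where
  "load P f e = (\<Sum>p\<in>{p\<in>P. e \<in> set p}. f p)"

definition path_cost :: "'e list set \<Rightarrow> ('e \<Rightarrow> real \<Rightarrow> real) \<Rightarrow> ('e list \<Rightarrow> real) \<Rightarrow> 'e list \<Rightarrow> real" where
  "path_cost P ce f p = (\<Sum>e\<in>set p. ce e (load P f e))"

definition wardrop :: "'e list set \<Rightarrow> ('e \<Rightarrow> real \<Rightarrow> real) \<Rightarrow> real \<Rightarrow> ('e list \<Rightarrow> real) \<Rightarrow> bool" where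
  "wardrop P ce M f \<longleftrightarrow> feasible P M f \<and>
     (\<forall>p\<in>P. \<forall>p'\<in>P. 0 < f p \<longrightarrow> path_cost P ce f p \<le> path_cost P ce f p')"

definition social_cost :: "'e set \<Rightarrow> 'e list set \<Rightarrow> ('e \<Rightarrow> real \<Rightarrow> real) \<Rightarrow> ('e list \<Rightarrow> real) \<Rightarrow> real" where
  "social_cost E P ce f = (\<Sum>e\<in>E. load P f e * ce e (load P f e))"

definition Opt :: "'e set \<Rightarrow> 'e list set \<Rightarrow> ('e \<Rightarrow> real \<Rightarrow> real) \<Rightarrow> real \<Rightarrow> real" where
  "Opt E P ce M = Inf (social_cost E P ce ` {f. feasible P M f})"

text \<open>All Wardrop equilibria have the same social cost; pick one.\<close>
definition Eq :: "'e set \<Rightarrow> 'e list set \<Rightarrow> ('e \<Rightarrow> real \<Rightarrow> real) \<Rightarrow> real \<Rightarrow> real" where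
  "Eq E P ce M = social_cost E P ce (SOME f. wardrop P ce M f)"

definition PoA :: "'e set \<Rightarrow> 'e list set \<Rightarrow> ('e \<Rightarrow> real \<Rightarrow> real) \<Rightarrow> real \<Rightarrow> real" where
  "PoA E P ce M = (if Opt E P ce M = 0 then 1 else Eq E P ce M / Opt E P ce M)"

definition regularly_varying_at_top :: "(real \<Rightarrow> real) \<Rightarrow> bool" where
  "regularly_varying_at_top g \<longleftrightarrow>
     (\<forall>x>0. \<exists>L. L \<noteq> 0 \<and> ((\<lambda>t. g (t * x) / g t) \<longlongrightarrow> L) at_top)"

end

theory Submission
  imports Defs
begin

text \<open>Wardrop equilibria exist because minimizers of the Beckmann potential are equilibria.
  Tightness provides an edge of finite positive index, and with it monotonicity of
  \<open>s \<mapsto> lim c(ts)/c(t)\<close>; by Karamata's characterisation this limit is \<open>s\<^sup>\<rho>\<close> for some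
  \<open>\<rho> \<ge> 0\<close>. On each edge of finite index, \<open>c\<^sub>e(Ms)/c(M) \<rightarrow> \<alpha>\<^sub>e s\<^sup>\<rho>\<close> uniformly in
  \<open>s \<in> [\<delta>, 1]\<close> (Polya), so Young's inequality
  \<open>x\<^sup>\<rho> y \<le> \<rho>/(\<rho>+1) x\<^sup>\<rho>\<^sup>+\<^sup>1 + 1/(\<rho>+1) y\<^sup>\<rho>\<^sup>+\<^sup>1\<close> transfers to
  \<open>c\<^sub>e(x) y \<le> \<rho>/(\<rho>+1) x c\<^sub>e(x) + 1/(\<rho>+1) y c\<^sub>e(y) + o(M c(M))\<close> for loads \<open>x, y \<le> M\<close>.
  Summed against the variational inequality of an equilibrium \<open>f\<close>, this gives
  \<open>L(f) \<le> L(y) + o(M c(M))\<close> for every feasible \<open>y\<close>; edges of infinite index only matter for flows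
  too expensive to be optimal. Since every feasible flow costs at least \<open>\<kappa> M c(M)\<close> (some path
  carries \<open>M/|P|\<close> and contains an edge of index at least \<open>\<alpha>/2\<close>), \<open>PoA \<rightarrow> 1\<close>.\<close>

section \<open>Flows\<close>

lemma load_nonneg: "feasible P M f \<Longrightarrow> 0 \<le> load P f e"
  unfolding load_def feasible_def by (auto intro: sum_nonneg)

lemma load_le_demand:
  assumes "finite P" "feasible P M f"
  shows "load P f e \<le> M"
proof -
  have "load P f e \<le> sum f P" unfolding load_def
    by (rule sum_mono2) (use assms in \<open>auto simp: feasible_def\<close>)
  then show ?thesis using assms by (simp add: feasible_def)
qed

lemma path_flow_le_load:
  "finite P \<Longrightarrow> feasible P M f \<Longrightarrow> p \<in> P \<Longrightarrow> e \<in> set p \<Longrightarrow> f p \<le> load P f e"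
  unfolding load_def feasible_def by (intro member_le_sum) auto

lemma sum_load_mult:
  assumes "finite E" "finite P" "\<And>p. p \<in> P \<Longrightarrow> set p \<subseteq> E"
  shows "(\<Sum>e\<in>E. load P f e * w e) = (\<Sum>p\<in>P. f p * (\<Sum>e\<in>set p. w e))"
proof -
  have "(\<Sum>e\<in>E. load P f e * w e) = (\<Sum>e\<in>E. \<Sum>p\<in>{p\<in>P. e \<in> set p}. f p * w e)"
    unfolding load_def by (simp add: sum_distrib_right)
  also have "\<dots> = (\<Sum>p\<in>P. \<Sum>e | e \<in> E \<and> e \<in> set p. f p * w e)"
    by (rule sum.swap_restrict[OF assms(1,2)])
  also have "\<dots> = (\<Sum>p\<in>P. f p * (\<Sum>e\<in>set p. w e))"
  proof (rule sum.cong[OF refl])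
    fix p assume "p \<in> P"
    then have "{e. e \<in> E \<and> e \<in> set p} = set p" using assms(3) by auto
    then show "(\<Sum>e | e \<in> E \<and> e \<in> set p. f p * w e) = f p * (\<Sum>e\<in>set p. w e)"
      by (simp add: sum_distrib_left)
  qed
  finally show ?thesis .
qed

lemma feasible_single_path:
  assumes "finite P" "p \<in> P" "0 \<le> M"
  shows "feasible P M (\<lambda>q. if q = p then M else 0)"
    and "load P (\<lambda>q. if q = p then M else 0) e = (if e \<in> set p then M else 0)"
  using assms unfolding feasible_def load_def by auto

lemma feasible_obtains_heavy_path:
  assumes "finite P" "P \<noteq> {}" "feasible P M f"
  obtains p where "p \<in> P" "M / real (card P) \<le> f p"
proof (rule ccontr)
  assume "\<not> thesis"
  with that have "\<forall>p\<in>P. f p < M / real (card P)" by force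
  then have "sum f P < (\<Sum>p\<in>P. M / real (card P))"
    using assms(1,2) by (intro sum_strict_mono) auto
  also have "\<dots> = M" using assms(1,2) by simp
  finally show False using assms(3) unfolding feasible_def by simp
qed

lemma edge_cost_le_social_cost:
  assumes "finite E" "feasible P M f" "\<And>e x. e \<in> E \<Longrightarrow> 0 \<le> x \<Longrightarrow> 0 \<le> ce e x" "e \<in> E"
  shows "load P f e * ce e (load P f e) \<le> social_cost E P ce f"
  unfolding social_cost_def
  using assms load_nonneg[OF assms(2)] by (intro member_le_sum mult_nonneg_nonneg) auto

definition shift_flow :: "'p \<Rightarrow> 'p \<Rightarrow> real \<Rightarrow> ('p \<Rightarrow> real) \<Rightarrow> 'p \<Rightarrow> real" where
  "shift_flow p q t f = (\<lambda>r. f r + (if r = q then t else 0) - (if r = p then t else 0))"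

lemma feasible_shift_flow:
  assumes "finite P" "feasible P M f" "p \<in> P" "q \<in> P" "p \<noteq> q" "0 \<le> t" "t \<le> f p"
  shows "feasible P M (shift_flow p q t f)"
  using assms unfolding feasible_def shift_flow_def by (auto simp: sum.distrib sum_subtractf)

lemma load_shift_flow:
  assumes "finite P" "p \<in> P" "q \<in> P"
  shows "load P (shift_flow p q t f) e
           = load P f e + (if e \<in> set q then t else 0) - (if e \<in> set p then t else 0)"
  using assms unfolding load_def shift_flow_def by (simp add: sum.distrib sum_subtractf)

section \<open>The Beckmann potential\<close>

definition cost_integral :: "(real \<Rightarrow> real) \<Rightarrow> real \<Rightarrow> real" where
  "cost_integral h z = integral {0..z} h"

definition beckmann_potential ::
    "'e set \<Rightarrow> 'e list set \<Rightarrow> ('e \<Rightarrow> real \<Rightarrow> real) \<Rightarrow> ('e list \<Rightarrow> real) \<Rightarrow> real" where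
  "beckmann_potential E P ce f = (\<Sum>e\<in>E. cost_integral (ce e) (load P f e))"

lemma cost_integral_increment_bounds:
  assumes h: "continuous_on {0..} h" "mono_on {0..} h" and z: "0 \<le> z" "z \<le> z'"
  shows "(z' - z) * h z \<le> cost_integral h z' - cost_integral h z"
    and "cost_integral h z' - cost_integral h z \<le> (z' - z) * h z'"
proof -
  have int: "h integrable_on {0..z'}" "h integrable_on {z..z'}"
    by (rule integrable_continuous_interval, rule continuous_on_subset[OF h(1)], use z in auto)+
  have split: "cost_integral h z' - cost_integral h z = integral {z..z'} h"
    using Henstock_Kurzweil_Integration.integral_combine[of 0 z z' h] int z unfolding cost_integral_def by simp
  have const: "integral {z..z'} (\<lambda>_. k) = (z' - z) * k" for k
    using z by simp
  have "integral {z..z'} (\<lambda>_. h z) \<le> integral {z..z'} h"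
    by (rule integral_le[OF integrable_const_ivl int(2)]) (use z in \<open>auto intro: mono_onD[OF h(2)]\<close>)
  then show "(z' - z) * h z \<le> cost_integral h z' - cost_integral h z"
    unfolding split const .
  have "integral {z..z'} h \<le> integral {z..z'} (\<lambda>_. h z')"
    by (rule integral_le[OF int(2) integrable_const_ivl]) (use z in \<open>auto intro: mono_onD[OF h(2)]\<close>)
  then show "cost_integral h z' - cost_integral h z \<le> (z' - z) * h z'"
    unfolding split const .
qed

lemma cost_integral_nonneg:
  assumes "continuous_on {0..} h" "\<And>x. 0 \<le> x \<Longrightarrow> 0 \<le> h x"
  shows "0 \<le> cost_integral h z"
  unfolding cost_integral_def
  by (rule Henstock_Kurzweil_Integration.integral_nonneg, rule integrable_continuous_interval,
      rule continuous_on_subset[OF assms(1)]) (use assms in auto)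

lemma continuous_on_cost_integral:
  assumes "continuous_on {0..} h"
  shows "continuous_on {0..K} (cost_integral h)"
proof -
  have "h integrable_on {0..K}"
    by (rule integrable_continuous_interval, rule continuous_on_subset[OF assms]) auto
  then show ?thesis unfolding cost_integral_def by (rule indefinite_integral_continuous_1)
qed

text \<open>\<open>bq\<close> (\<open>bp\<close>) records whether the edge lies on the path that gains (loses) \<open>t\<close> units of flow.\<close>
lemma cost_integral_shift_le:
  assumes h: "continuous_on {0..} h" "mono_on {0..} h" and x: "0 \<le> x" and t: "0 \<le> t"
    and tp: "bp \<Longrightarrow> t \<le> x"
  shows "cost_integral h (x + (if bq then t else 0) - (if bp then t else 0)) - cost_integral h x
     \<le> (if bq then t * h (x + t) else 0) - (if bp then t * h (x - t) else 0)"
proof (cases bq; cases bp)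
  assume "bq" "bp"
  then have "h (x - t) \<le> h (x + t)" using x t tp by (auto intro: mono_onD[OF h(2)])
  then show ?thesis using \<open>bq\<close> \<open>bp\<close> t by (simp add: algebra_simps mult_left_mono)
next
  assume "bq" "\<not> bp"
  then show ?thesis using cost_integral_increment_bounds(2)[OF h, of x "x + t"] x t by simp
next
  assume "\<not> bq" "bp"
  then show ?thesis using cost_integral_increment_bounds(1)[OF h, of "x - t" x] x t tp by simp
qed simp

lemma finite_family_convergent_subseq:
  fixes X :: "nat \<Rightarrow> 'a \<Rightarrow> real"
  assumes "finite I" "\<And>n i. i \<in> I \<Longrightarrow> X n i \<in> {a..b}"
  obtains r where "strict_mono r" "\<And>i. i \<in> I \<Longrightarrow> convergent (\<lambda>n. X (r n) i)"
  using assms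
proof (induction I arbitrary: thesis rule: finite_induct)
  case empty
  then show ?case using strict_mono_id by blast
next
  case (insert j I)
  then obtain r where r: "strict_mono r" "\<And>i. i \<in> I \<Longrightarrow> convergent (\<lambda>n. X (r n) i)"
    by auto
  have "\<And>n. X (r n) j \<in> {a..b}" using insert.prems(2) by simp
  then obtain l s where s: "strict_mono s" "((\<lambda>n. X (r n) j) \<circ> s) \<longlonglongrightarrow> l"
    using compact_Icc[of a b, unfolded compact_def, rule_format, of "\<lambda>n. X (r n) j"] by blast
  show ?case
  proof (rule insert.prems(1)[of "r \<circ> s"])
    show "strict_mono (r \<circ> s)" using r(1) s(1) by (rule strict_mono_o)
    fix i assume "i \<in> insert j I"
    then show "convergent (\<lambda>n. X ((r \<circ> s) n) i)"
    proof
      assume "i = j"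
      then show ?thesis using s(2) by (auto simp: o_def convergent_def)
    next
      assume "i \<in> I"
      then show ?thesis
        using r(2) LIMSEQ_subseq_LIMSEQ[OF _ s(1)] by (fastforce simp: convergent_def o_def)
    qed
  qed
qed

section \<open>Wardrop equilibria\<close>

lemma le_of_young_absorb:
  fixes S T R \<rho> :: real
  assumes \<rho>: "0 \<le> \<rho>" and S: "S \<le> \<rho> / (\<rho> + 1) * S + 1 / (\<rho> + 1) * T + R"
  shows "S \<le> T + (\<rho> + 1) * R"
proof -
  have "(\<rho> + 1) * S \<le> (\<rho> + 1) * (\<rho> / (\<rho> + 1) * S + 1 / (\<rho> + 1) * T + R)"
    using S \<rho> by (intro mult_left_mono) auto
  also have "\<dots> = \<rho> * S + T + (\<rho> + 1) * R"
    using \<rho> by (simp add: distrib_left mult.assoc[symmetric])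
  finally show ?thesis by (simp add: algebra_simps)
qed

locale routing_game =
  fixes E :: "'e set" and P :: "'e list set" and ce :: "'e \<Rightarrow> real \<Rightarrow> real"
  assumes finite_E: "finite E" and finite_P: "finite P" and P_nonempty: "P \<noteq> {}"
    and paths_in_E: "\<And>p. p \<in> P \<Longrightarrow> set p \<subseteq> E"
    and cost_cont: "\<And>e. e \<in> E \<Longrightarrow> continuous_on {0..} (ce e)"
    and cost_mono_on: "\<And>e. e \<in> E \<Longrightarrow> mono_on {0..} (ce e)"
    and cost_nonneg: "\<And>e x. e \<in> E \<Longrightarrow> 0 \<le> x \<Longrightarrow> 0 \<le> ce e x"
begin

lemma cost_mono: "e \<in> E \<Longrightarrow> 0 \<le> x \<Longrightarrow> x \<le> y \<Longrightarrow> ce e x \<le> ce e y"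
  by (rule mono_onD[OF cost_mono_on]) auto

lemma wardrop_variational_ineq:
  assumes W: "wardrop P ce M f" and G: "feasible P M g"
  shows "social_cost E P ce f \<le> (\<Sum>e\<in>E. ce e (load P f e) * load P g e)"
proof -
  define pc where "pc = path_cost P ce f"
  define m where "m = Min (pc ` P)"
  have F: "feasible P M f" using W unfolding wardrop_def by auto
  have m_le: "m \<le> pc p" if "p \<in> P" for p using that finite_P unfolding m_def by auto
  have used_min: "f p * pc p = f p * m" if "p \<in> P" for p
  proof (cases "f p > 0")
    case True
    then have "pc p \<le> m"
      using W that finite_P P_nonempty unfolding m_def pc_def wardrop_def by (auto intro!: Min.boundedI)
    with m_le[OF that] show ?thesis by simp
  next
    case False
    then show ?thesis using F that unfolding feasible_def by force
  qed
  have "social_cost E P ce f = (\<Sum>p\<in>P. f p * pc p)"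
    unfolding social_cost_def pc_def path_cost_def by (rule sum_load_mult[OF finite_E finite_P paths_in_E])
  also have "\<dots> = (\<Sum>p\<in>P. f p) * m" by (simp add: used_min sum_distrib_right)
  also have "\<dots> = (\<Sum>p\<in>P. g p) * m" using F G unfolding feasible_def by simp
  also have "\<dots> \<le> (\<Sum>p\<in>P. g p * pc p)"
    unfolding sum_distrib_right using G m_le unfolding feasible_def by (intro sum_mono mult_left_mono) auto
  also have "\<dots> = (\<Sum>e\<in>E. load P g e * ce e (load P f e))"
    unfolding pc_def path_cost_def by (rule sum_load_mult[OF finite_E finite_P paths_in_E, symmetric])
  finally show ?thesis by (simp add: mult.commute)
qed

lemma wardrop_edge_cost_le_path_cost:
  assumes W: "wardrop P ce M f" and q: "q \<in> P" and e: "e \<in> E" and pos: "0 < load P f e"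
  shows "ce e (load P f e) \<le> path_cost P ce f q"
proof -
  have F: "feasible P M f" using W unfolding wardrop_def by auto
  obtain p where p: "p \<in> P" "e \<in> set p" "f p > 0"
  proof (rule ccontr)
    assume "\<not> thesis"
    with that have "\<forall>p\<in>{p\<in>P. e \<in> set p}. f p \<le> 0" by force
    then have "load P f e \<le> 0" unfolding load_def by (blast intro: sum_nonpos)
    with pos show False by simp
  qed
  have "ce e (load P f e) \<le> path_cost P ce f p"
    unfolding path_cost_def
    by (rule member_le_sum[OF p(2)]) (use p paths_in_E in \<open>auto intro!: cost_nonneg load_nonneg[OF F]\<close>)
  also have "\<dots> \<le> path_cost P ce f q" using W p q unfolding wardrop_def by auto
  finally show ?thesis .
qed

lemma wardrop_path_cost_le:
  assumes W: "wardrop P ce M f" and q: "q \<in> P"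
  shows "path_cost P ce f q \<le> (\<Sum>e\<in>set q. ce e M)"
  unfolding path_cost_def
proof (rule sum_mono)
  have F: "feasible P M f" using W unfolding wardrop_def by auto
  fix e assume "e \<in> set q"
  then show "ce e (load P f e) \<le> ce e M"
    using q paths_in_E load_nonneg[OF F] load_le_demand[OF finite_P F] by (intro cost_mono) auto
qed

lemma wardrop_social_cost_le:
  assumes W: "wardrop P ce M f" and q: "q \<in> P" and M: "0 \<le> M"
  shows "social_cost E P ce f \<le> M * (\<Sum>e\<in>set q. ce e M)"
proof -
  define g where "g = (\<lambda>r. if r = q then M else 0)"
  have G: "feasible P M g" and load_g: "\<And>e. load P g e = (if e \<in> set q then M else 0)"
    unfolding g_def using feasible_single_path[OF finite_P q M] by auto
  have "social_cost E P ce f \<le> (\<Sum>e\<in>E. ce e (load P f e) * load P g e)"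
    by (rule wardrop_variational_ineq[OF W G])
  also have "\<dots> = (\<Sum>e\<in>E. if e \<in> set q then ce e (load P f e) * M else 0)"
    by (rule sum.cong) (auto simp: load_g)
  also have "\<dots> = (\<Sum>e\<in>set q. ce e (load P f e)) * M"
    using finite_E paths_in_E[OF q] by (simp add: sum.If_cases Int_absorb1 sum_distrib_right)
  also have "\<dots> \<le> M * (\<Sum>e\<in>set q. ce e M)"
    using wardrop_path_cost_le[OF W q] M unfolding path_cost_def by (simp add: mult.commute mult_left_mono)
  finally show ?thesis .
qed

lemma social_cost_le_of_edge_young:
  assumes W: "wardrop P ce M f" and Y: "feasible P M y" and \<rho>: "0 \<le> \<rho>"
    and edge: "\<And>e. e \<in> E \<Longrightarrow> ce e (load P f e) * load P y e
      \<le> \<rho> / (\<rho> + 1) * (load P f e * ce e (load P f e)) + 1 / (\<rho> + 1) * (load P y e * ce e (load P y e)) + R"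
  shows "social_cost E P ce f \<le> social_cost E P ce y + (\<rho> + 1) * (real (card E) * R)"
proof -
  have "social_cost E P ce f \<le> (\<Sum>e\<in>E. ce e (load P f e) * load P y e)"
    by (rule wardrop_variational_ineq[OF W Y])
  also have "\<dots> \<le> \<rho> / (\<rho> + 1) * social_cost E P ce f + 1 / (\<rho> + 1) * social_cost E P ce y + real (card E) * R"
    using sum_mono[OF edge] by (simp add: social_cost_def sum.distrib sum_distrib_left)
  finally show ?thesis by (rule le_of_young_absorb[OF \<rho>])
qed

text \<open>A minimizer of the Beckmann potential is an equilibrium: shifting a little flow from a used
  path \<open>p\<close> to a strictly cheaper path \<open>q\<close> would decrease the potential at first order.\<close>

lemma beckmann_potential_shift_le:
  assumes F: "feasible P M f" and p: "p \<in> P" and q: "q \<in> P" and t: "0 \<le> t" "t \<le> f p"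
  shows "beckmann_potential E P ce (shift_flow p q t f) - beckmann_potential E P ce f
           \<le> t * ((\<Sum>e\<in>set q. ce e (load P f e + t)) - (\<Sum>e\<in>set p. ce e (load P f e - t)))"
proof -
  let ?x = "load P f"
  have "beckmann_potential E P ce (shift_flow p q t f) - beckmann_potential E P ce f
      = (\<Sum>e\<in>E. cost_integral (ce e) (load P (shift_flow p q t f) e) - cost_integral (ce e) (?x e))"
    unfolding beckmann_potential_def by (simp add: sum_subtractf)
  also have "\<dots> \<le> (\<Sum>e\<in>E. (if e \<in> set q then t * ce e (?x e + t) else 0)
                          - (if e \<in> set p then t * ce e (?x e - t) else 0))"
  proof (rule sum_mono)
    fix e assume e: "e \<in> E"
    have "e \<in> set p \<Longrightarrow> t \<le> ?x e"
      using path_flow_le_load[OF finite_P F p] t by force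
    then show "cost_integral (ce e) (load P (shift_flow p q t f) e) - cost_integral (ce e) (?x e)
        \<le> (if e \<in> set q then t * ce e (?x e + t) else 0) - (if e \<in> set p then t * ce e (?x e - t) else 0)"
      unfolding load_shift_flow[OF finite_P p q]
      by (intro cost_integral_shift_le cost_cont cost_mono_on e load_nonneg[OF F] t(1))
  qed
  also have "\<dots> = t * ((\<Sum>e\<in>set q. ce e (?x e + t)) - (\<Sum>e\<in>set p. ce e (?x e - t)))"
    using finite_E paths_in_E[OF p] paths_in_E[OF q]
    by (simp add: sum_subtractf sum.If_cases Int_absorb1 sum_distrib_left right_diff_distrib)
  finally show ?thesis .
qed

lemma tendsto_shift_cost_difference:
  assumes F: "feasible P M f" and p: "p \<in> P" "0 < f p" and q: "q \<in> P"
  shows "((\<lambda>t. (\<Sum>e\<in>set q. ce e (load P f e + t)) - (\<Sum>e\<in>set p. ce e (load P f e - t)))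
           \<longlongrightarrow> path_cost P ce f q - path_cost P ce f p) (at_right 0)"
proof -
  let ?x = "load P f"
  have cont_at: "((\<lambda>t. ce e (?x e + s * t)) \<longlongrightarrow> ce e (?x e)) (at_right 0)"
    if "e \<in> E" "\<forall>\<^sub>F t in at_right 0. 0 \<le> ?x e + s * t" for e s
  proof -
    have "((\<lambda>t. ?x e + s * t) \<longlongrightarrow> ?x e) (at_right 0)" by (auto intro!: tendsto_eq_intros)
    from continuous_on_tendsto_compose[OF cost_cont[OF that(1)] this] show ?thesis
      using that(2) load_nonneg[OF F] by simp
  qed
  have "((\<lambda>t. ce e (?x e + t)) \<longlongrightarrow> ce e (?x e)) (at_right 0)" if e: "e \<in> set q" for e
  proof -
    have "\<forall>\<^sub>F t in at_right 0. 0 \<le> ?x e + 1 * t"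
      using eventually_at_right_less[of 0] load_nonneg[OF F, of e] by (auto elim: eventually_mono)
    then show ?thesis using cont_at[of e 1] e q paths_in_E by auto
  qed
  moreover have "((\<lambda>t. ce e (?x e - t)) \<longlongrightarrow> ce e (?x e)) (at_right 0)" if e: "e \<in> set p" for e
  proof -
    have "\<forall>\<^sub>F t in at_right 0. 0 \<le> ?x e + (-1) * t"
      using eventually_at_right_real[OF p(2)] path_flow_le_load[OF finite_P F p(1) e]
      by (auto elim: eventually_mono)
    then show ?thesis using cont_at[of e "-1"] e p paths_in_E by auto
  qed
  ultimately show ?thesis unfolding path_cost_def by (intro tendsto_diff tendsto_sum) auto
qed

lemma beckmann_minimizer_is_wardrop:
  assumes F: "feasible P M f"
    and min: "\<And>g. feasible P M g \<Longrightarrow> beckmann_potential E P ce f \<le> beckmann_potential E P ce g"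
  shows "wardrop P ce M f"
  unfolding wardrop_def
proof (intro conjI F ballI impI)
  fix p q assume p: "p \<in> P" and q: "q \<in> P" and fp: "0 < f p"
  define D where "D t = (\<Sum>e\<in>set q. ce e (load P f e + t)) - (\<Sum>e\<in>set p. ce e (load P f e - t))" for t
  show "path_cost P ce f p \<le> path_cost P ce f q"
  proof (rule ccontr)
    assume not_le: "\<not> ?thesis"
    then have "p \<noteq> q" by auto
    from not_le have "\<forall>\<^sub>F t in at_right 0. D t < 0"
      using order_tendstoD(2)[OF tendsto_shift_cost_difference[OF F p fp q, folded D_def], of 0] by simp
    then have "\<forall>\<^sub>F t in at_right 0. D t < 0 \<and> t \<in> {0<..<f p}"
      using eventually_at_right_real[OF fp] by (rule eventually_conj)
    then obtain t where t: "D t < 0" "0 < t" "t < f p"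
      using eventually_happens[of _ "at_right (0::real)"] by auto
    have "beckmann_potential E P ce (shift_flow p q t f) - beckmann_potential E P ce f \<le> t * D t"
      unfolding D_def using beckmann_potential_shift_le[OF F p q] t by simp
    also have "\<dots> < 0" using t by (simp add: mult_pos_neg)
    finally show False
      using min[OF feasible_shift_flow[OF finite_P F p q \<open>p \<noteq> q\<close> _ t(3)[THEN less_imp_le]]] t
      by auto
  qed
qed

lemma beckmann_potential_tendsto:
  assumes X: "\<And>n. feasible P M (X n)" and lim: "\<And>p. p \<in> P \<Longrightarrow> (\<lambda>n. X n p) \<longlonglongrightarrow> g p"
  shows "feasible P M g"
    and "(\<lambda>n. beckmann_potential E P ce (X n)) \<longlonglongrightarrow> beckmann_potential E P ce g"
proof -
  have "0 \<le> g p" if "p \<in> P" for p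
    by (rule LIMSEQ_le_const[OF lim[OF that]]) (use X that in \<open>auto simp: feasible_def\<close>)
  moreover have "(\<lambda>n. \<Sum>p\<in>P. X n p) \<longlonglongrightarrow> (\<Sum>p\<in>P. g p)"
    by (intro tendsto_sum lim)
  then have "(\<Sum>p\<in>P. g p) = M"
    using X unfolding feasible_def by (simp add: LIMSEQ_const_iff)
  ultimately show G: "feasible P M g" unfolding feasible_def by blast
  show "(\<lambda>n. beckmann_potential E P ce (X n)) \<longlonglongrightarrow> beckmann_potential E P ce g"
    unfolding beckmann_potential_def
  proof (intro tendsto_sum)
    fix e assume e: "e \<in> E"
    have load_lim: "(\<lambda>n. load P (X n) e) \<longlonglongrightarrow> load P g e"
      unfolding load_def by (intro tendsto_sum lim) auto
    have bound: "\<And>h. feasible P M h \<Longrightarrow> load P h e \<in> {0..M}"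
      using load_nonneg load_le_demand[OF finite_P] by auto
    show "(\<lambda>n. cost_integral (ce e) (load P (X n) e)) \<longlonglongrightarrow> cost_integral (ce e) (load P g e)"
      by (rule continuous_on_tendsto_compose[OF continuous_on_cost_integral[OF cost_cont[OF e]]
          load_lim bound[OF G]]) (use bound[OF X] in \<open>simp add: always_eventually\<close>)
  qed
qed

lemma beckmann_potential_has_minimizer:
  assumes M: "0 \<le> M"
  obtains f where "feasible P M f"
    "\<And>g. feasible P M g \<Longrightarrow> beckmann_potential E P ce f \<le> beckmann_potential E P ce g"
proof -
  let ?\<Phi> = "beckmann_potential E P ce"
  define I where "I = Inf (?\<Phi> ` {f. feasible P M f})"
  obtain p0 where "p0 \<in> P" using P_nonempty by auto
  then have nonempty: "?\<Phi> ` {f. feasible P M f} \<noteq> {}"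
    using feasible_single_path(1)[OF finite_P _ M] by blast
  have "0 \<le> ?\<Phi> f" if "feasible P M f" for f
    unfolding beckmann_potential_def
    by (intro sum_nonneg cost_integral_nonneg cost_cont) (auto intro: cost_nonneg)
  then have bdd: "bdd_below (?\<Phi> ` {f. feasible P M f})" by (auto intro!: bdd_belowI[of _ 0])
  have "\<exists>f. feasible P M f \<and> ?\<Phi> f < I + inverse (real (Suc n))" for n
    using cInf_lessD[OF nonempty, of "I + inverse (real (Suc n))"] unfolding I_def by auto
  then obtain X where X: "\<And>n. feasible P M (X n)" "\<And>n. ?\<Phi> (X n) < I + inverse (real (Suc n))"
    by metis
  have "X n p \<in> {0..M}" if "p \<in> P" for n p
    using X(1)[of n] that finite_P member_le_sum[of p P "X n"] unfolding feasible_def by auto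
  then obtain r where r: "strict_mono r" "\<And>p. p \<in> P \<Longrightarrow> convergent (\<lambda>n. X (r n) p)"
    using finite_family_convergent_subseq[OF finite_P] by metis
  define g where "g p = lim (\<lambda>n. X (r n) p)" for p
  have lim: "(\<lambda>n. X (r n) p) \<longlonglongrightarrow> g p" if "p \<in> P" for p
    using r(2)[OF that] unfolding g_def by (simp add: convergent_LIMSEQ_iff)
  note G = beckmann_potential_tendsto[where X = "\<lambda>n. X (r n)", OF X(1) lim]
  have "?\<Phi> g \<le> I"
  proof (rule LIMSEQ_le[OF G(2)])
    show "(\<lambda>n. I + inverse (real (Suc (r n)))) \<longlonglongrightarrow> I"
      using LIMSEQ_subseq_LIMSEQ[OF tendsto_add[OF tendsto_const LIMSEQ_inverse_real_of_nat] r(1)]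
      by (simp add: o_def)
    show "\<exists>N. \<forall>n\<ge>N. ?\<Phi> (X (r n)) \<le> I + inverse (real (Suc (r n)))"
      using X(2) less_imp_le by blast
  qed
  moreover have "I \<le> ?\<Phi> h" if "feasible P M h" for h
    unfolding I_def using that bdd by (auto intro: cInf_lower)
  ultimately show ?thesis using that G(1) by fastforce
qed

lemma wardrop_exists: "0 \<le> M \<Longrightarrow> \<exists>f. wardrop P ce M f"
  by (metis beckmann_potential_has_minimizer beckmann_minimizer_is_wardrop)

lemma PoA_bounds:
  assumes M: "0 \<le> M" and \<kappa>: "0 < \<kappa>" and \<epsilon>: "0 \<le> \<epsilon>"
    and lower: "\<And>y. feasible P M y \<Longrightarrow> \<kappa> \<le> social_cost E P ce y"
    and near_opt: "\<And>f y. wardrop P ce M f \<Longrightarrow> feasible P M y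
                     \<Longrightarrow> social_cost E P ce f \<le> social_cost E P ce y + \<epsilon> * \<kappa>"
  shows "1 \<le> PoA E P ce M" "PoA E P ce M \<le> 1 + \<epsilon>"
proof -
  define S where "S = social_cost E P ce ` {f. feasible P M f}"
  have W: "wardrop P ce M (SOME f. wardrop P ce M f)"
    using someI_ex[OF wardrop_exists[OF M]] .
  then have F: "feasible P M (SOME f. wardrop P ce M f)" unfolding wardrop_def by auto
  then have "S \<noteq> {}" unfolding S_def by auto
  have "Opt E P ce M \<le> Eq E P ce M"
    unfolding Opt_def Eq_def using F lower \<kappa>
    by (intro cInf_lower) (auto intro!: bdd_belowI[of _ 0] dest: lower intro: order.trans[OF less_imp_le[OF \<kappa>]])
  moreover have "\<kappa> \<le> Opt E P ce M"
    unfolding Opt_def S_def[symmetric] using \<open>S \<noteq> {}\<close> lower by (intro cInf_greatest) (auto simp: S_def)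
  moreover have "Eq E P ce M - \<epsilon> * \<kappa> \<le> Opt E P ce M"
    unfolding Opt_def S_def[symmetric]
  proof (rule cInf_greatest[OF \<open>S \<noteq> {}\<close>])
    fix x assume "x \<in> S"
    then obtain y where "feasible P M y" "x = social_cost E P ce y" unfolding S_def by auto
    then show "Eq E P ce M - \<epsilon> * \<kappa> \<le> x" unfolding Eq_def using near_opt[OF W] by force
  qed
  ultimately show "1 \<le> PoA E P ce M" "PoA E P ce M \<le> 1 + \<epsilon>"
    using \<kappa> \<epsilon> mult_left_mono[OF \<open>\<kappa> \<le> Opt E P ce M\<close> \<epsilon>]
    by (auto simp: PoA_def field_simps)
qed

end

section \<open>Regular variation\<close>

lemma mono_additive_eq_linear:
  fixes \<phi> :: "real \<Rightarrow> real"
  assumes add: "\<And>u v. \<phi> (u + v) = \<phi> u + \<phi> v" and mono: "mono \<phi>"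
  shows "\<phi> u = u * \<phi> 1"
proof -
  define \<rho> where "\<rho> = \<phi> 1"
  have zero: "\<phi> 0 = 0" using add[of 0 0] by simp
  have nat: "\<phi> (real n * v) = real n * \<phi> v" for n v
    by (induction n) (simp_all add: zero distrib_right add)
  have int: "\<phi> (of_int k) = of_int k * \<rho>" for k
  proof (cases "0 \<le> k")
    case True
    then show ?thesis using nat[of "nat k" 1] unfolding \<rho>_def by simp
  next
    case False
    have "\<phi> (of_int k) + \<phi> (of_int (- k)) = 0" using add[of "of_int k" "of_int (- k)"] zero by simp
    then show ?thesis using False nat[of "nat (- k)" 1] unfolding \<rho>_def by simp
  qed
  have "\<rho> \<ge> 0" using monoD[OF mono, of 0 1] zero unfolding \<rho>_def by simp
  have bound: "\<bar>\<phi> u - u * \<rho>\<bar> \<le> \<rho> / real n" if "n \<ge> 1" for n :: nat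
  proof -
    define k where "k = \<lfloor>real n * u\<rfloor>"
    have k: "of_int k \<le> real n * u" "real n * u \<le> of_int k + 1"
      unfolding k_def by linarith+
    then have "\<phi> (of_int k) \<le> \<phi> (real n * u)" "\<phi> (real n * u) \<le> \<phi> (of_int (k + 1))"
      by (auto intro: monoD[OF mono])
    moreover have "of_int k * \<rho> \<le> real n * u * \<rho>" "real n * u * \<rho> \<le> (of_int k + 1) * \<rho>"
      using k \<open>\<rho> \<ge> 0\<close> by (auto intro: mult_right_mono)
    ultimately have "\<bar>real n * (\<phi> u - u * \<rho>)\<bar> \<le> \<rho>"
      unfolding nat int by (simp add: algebra_simps)
    then have "real n * \<bar>\<phi> u - u * \<rho>\<bar> \<le> \<rho>" by (simp only: abs_mult abs_of_nat)
    then show ?thesis using that by (simp add: le_divide_eq mult.commute)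
  qed
  have "\<bar>\<phi> u - u * \<rho>\<bar> \<le> 0"
    by (rule tendsto_le[OF _ lim_const_over_n tendsto_const])
      (use bound in \<open>auto simp: eventually_sequentially\<close>)
  then show ?thesis unfolding \<rho>_def by simp
qed

lemma filterlim_mult_const_at_top: "0 < s \<Longrightarrow> filterlim (\<lambda>t. t * s) at_top at_top"
  for s :: real
  by (rule filterlim_at_top_mult_tendsto_pos[OF tendsto_const _ filterlim_ident])

lemma eventually_at_top_scaled:
  fixes s :: real
  shows "0 < s \<Longrightarrow> \<forall>\<^sub>F x in at_top. Q x \<Longrightarrow> \<forall>\<^sub>F M in at_top. Q (M * s)"
  using eventually_compose_filterlim filterlim_mult_const_at_top by blast

definition rv_limit :: "(real \<Rightarrow> real) \<Rightarrow> real \<Rightarrow> real" where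
  "rv_limit c s = Lim at_top (\<lambda>t. c (t * s) / c t)"

locale regularly_varying =
  fixes c :: "real \<Rightarrow> real"
  assumes c_pos: "\<And>x. 0 < x \<Longrightarrow> 0 < c x" and regularly_varying: "regularly_varying_at_top c"
begin

lemma tendsto_rv_limit:
  assumes s: "0 < s"
  shows "((\<lambda>t. c (t * s) / c t) \<longlongrightarrow> rv_limit c s) at_top"
    and "rv_limit c s \<noteq> 0"
proof -
  obtain L where L: "L \<noteq> 0" "((\<lambda>t. c (t * s) / c t) \<longlongrightarrow> L) at_top"
    using regularly_varying s unfolding regularly_varying_at_top_def by blast
  moreover from L(2) have "rv_limit c s = L" unfolding rv_limit_def by (rule tendsto_Lim[rotated]) simp
  ultimately show "((\<lambda>t. c (t * s) / c t) \<longlongrightarrow> rv_limit c s) at_top" "rv_limit c s \<noteq> 0" by auto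
qed

lemma rv_limit_pos:
  assumes s: "0 < s"
  shows "0 < rv_limit c s"
proof -
  have "\<forall>\<^sub>F t in at_top. 0 \<le> c (t * s) / c t"
    using eventually_gt_at_top[of 0]
  proof eventually_elim
    case (elim t)
    then show ?case using c_pos[of t] c_pos[of "t * s"] s by simp
  qed
  then have "0 \<le> rv_limit c s"
    by (rule tendsto_lowerbound[OF tendsto_rv_limit(1)[OF s]]) simp
  then show ?thesis using tendsto_rv_limit(2)[OF s] by simp
qed

lemma tendsto_scaled_ratio:
  assumes h: "((\<lambda>x. h x / c x) \<longlongrightarrow> a) at_top" and s: "0 < s"
  shows "((\<lambda>t. h (t * s) / c t) \<longlongrightarrow> a * rv_limit c s) at_top"
proof -
  have "((\<lambda>t. h (t * s) / c (t * s) * (c (t * s) / c t)) \<longlongrightarrow> a * rv_limit c s) at_top"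
    by (intro tendsto_mult filterlim_compose[OF h filterlim_mult_const_at_top[OF s]] tendsto_rv_limit s)
  moreover have "\<forall>\<^sub>F t in at_top. h (t * s) / c (t * s) * (c (t * s) / c t) = h (t * s) / c t"
    using eventually_gt_at_top[of 0]
  proof eventually_elim
    case (elim t)
    then have "0 < c (t * s)" using s by (simp add: c_pos)
    then show ?case by simp
  qed
  ultimately show ?thesis by (rule Lim_transform_eventually)
qed

lemma rv_limit_mult:
  assumes s: "0 < s" and u: "0 < u"
  shows "rv_limit c (s * u) = rv_limit c s * rv_limit c u"
proof -
  have lim: "((\<lambda>t. c (t * (s * u)) / c t) \<longlongrightarrow> rv_limit c u * rv_limit c s) at_top"
    using tendsto_scaled_ratio[OF tendsto_rv_limit(1)[OF u] s] by (simp add: mult.assoc)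
  then have "rv_limit c (s * u) = rv_limit c u * rv_limit c s"
    using tendsto_unique[OF _ tendsto_rv_limit(1)[OF mult_pos_pos[OF s u]] lim] by simp
  then show ?thesis by (simp add: mult.commute)
qed

text \<open>Monotonicity of the limit function needs a nondecreasing function comparable to \<open>c\<close>;
  the regular variation assumption alone does not make \<open>c\<close> monotone.\<close>
lemma rv_limit_mono:
  assumes h: "((\<lambda>x. h x / c x) \<longlongrightarrow> a) at_top" "0 < a" and h_mono: "mono_on {0..} h"
    and s: "0 < s" "s \<le> s'"
  shows "rv_limit c s \<le> rv_limit c s'"
proof -
  have "a * rv_limit c s \<le> a * rv_limit c s'"
  proof (rule tendsto_le[OF _ tendsto_scaled_ratio[OF h(1)] tendsto_scaled_ratio[OF h(1)]])
    show "\<forall>\<^sub>F t in at_top. h (t * s) / c t \<le> h (t * s') / c t"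
      using eventually_gt_at_top[of 0]
    proof eventually_elim
      case (elim t)
      then have "h (t * s) \<le> h (t * s')" using s by (auto intro: mono_onD[OF h_mono] mult_left_mono)
      then show ?case using c_pos[OF elim] by (simp add: divide_right_mono)
    qed
  qed (use s in auto)
  then show ?thesis using h(2) by simp
qed

text \<open>Karamata's characterisation: \<open>\<phi> u = ln (rv_limit c (exp u))\<close> is additive and monotone.\<close>
lemma rv_limit_eq_powr:
  assumes h: "((\<lambda>x. h x / c x) \<longlongrightarrow> a) at_top" "0 < a" and h_mono: "mono_on {0..} h"
  obtains \<rho> where "0 \<le> \<rho>" "\<And>s. 0 < s \<Longrightarrow> rv_limit c s = s powr \<rho>"
proof -
  define \<phi> where "\<phi> u = ln (rv_limit c (exp u))" for u
  have add: "\<phi> (u + v) = \<phi> u + \<phi> v" for u v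
    unfolding \<phi>_def using rv_limit_mult[of "exp u" "exp v"] rv_limit_pos[of "exp u"] rv_limit_pos[of "exp v"]
    by (simp add: exp_add ln_mult)
  have "mono \<phi>"
    unfolding \<phi>_def by (rule monoI) (simp add: rv_limit_mono[OF h h_mono] rv_limit_pos)
  then have lin: "\<phi> u = u * \<phi> 1" for u by (intro mono_additive_eq_linear add)
  have "0 \<le> \<phi> 1" using monoD[OF \<open>mono \<phi>\<close>, of 0 1] lin[of 0] by simp
  moreover have "rv_limit c s = s powr \<phi> 1" if "0 < s" for s
  proof -
    have "rv_limit c s = exp (\<phi> (ln s))" unfolding \<phi>_def using that rv_limit_pos[OF that] by simp
    also have "\<dots> = s powr \<phi> 1" using that lin[of "ln s"] by (simp add: powr_def mult.commute)
    finally show ?thesis .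
  qed
  ultimately show ?thesis using that by blast
qed

end

section \<open>Uniform approximation and Young's inequality\<close>

lemma grid_bracket:
  fixes a b h s :: real
  defines "pt \<equiv> \<lambda>i. min b (a + real i * h)"
  assumes h: "0 < h" and s: "a \<le> s" "s \<le> b"
  obtains i where "i \<le> nat \<lceil>(b - a) / h\<rceil>" "pt i \<in> {a..b}" "pt (Suc i) \<in> {a..b}"
    "pt i \<le> s" "s \<le> pt (Suc i)" "s - pt i < h" "pt (Suc i) - s \<le> h"
proof
  define q where "q = (s - a) / h"
  let ?i = "nat \<lfloor>q\<rfloor>"
  have q: "0 \<le> q" "q \<le> (b - a) / h" using h s unfolding q_def by (auto intro: divide_right_mono)
  then show "?i \<le> nat \<lceil>(b - a) / h\<rceil>" by (intro nat_mono) linarith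
  have "real ?i \<le> q" "q < real ?i + 1" using q(1) by linarith+
  then have l: "real ?i * h \<le> s - a" "s - a < real ?i * h + h"
    using h unfolding q_def by (simp_all add: pos_le_divide_eq pos_divide_less_eq algebra_simps)
  have pt: "pt ?i = a + real ?i * h" "pt (Suc ?i) = min b (a + real ?i * h + h)"
    unfolding pt_def using l s by (simp_all add: algebra_simps)
  show "pt ?i \<in> {a..b}" "pt (Suc ?i) \<in> {a..b}" "pt ?i \<le> s" "s \<le> pt (Suc ?i)" "s - pt ?i < h"
    "pt (Suc ?i) - s \<le> h"
    unfolding pt using l s h by auto
qed

text \<open>Polya's theorem. The limit is compared on a finite grid of mesh below the modulus of uniform
  continuity, and monotonicity squeezes each value between two neighbouring grid values.\<close>
lemma eventually_uniform_approx_of_mono: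
  fixes g :: "'a \<Rightarrow> real \<Rightarrow> real"
  assumes conv: "\<And>s. s \<in> {a..b} \<Longrightarrow> ((\<lambda>M. g M s) \<longlongrightarrow> \<phi> s) F"
    and cont: "continuous_on {a..b} \<phi>"
    and mono: "\<forall>\<^sub>F M in F. mono_on {a..b} (g M)"
    and \<epsilon>: "0 < \<epsilon>"
  shows "\<forall>\<^sub>F M in F. \<forall>s\<in>{a..b}. \<bar>g M s - \<phi> s\<bar> \<le> \<epsilon>"
proof -
  have "uniformly_continuous_on {a..b} \<phi>" by (rule compact_uniformly_continuous[OF cont compact_Icc])
  moreover have "0 < \<epsilon> / 2" using \<epsilon> by simp
  ultimately obtain d where d: "0 < d"
    "\<And>x x'. x \<in> {a..b} \<Longrightarrow> x' \<in> {a..b} \<Longrightarrow> dist x' x < d \<Longrightarrow> dist (\<phi> x') (\<phi> x) < \<epsilon> / 2"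
    unfolding uniformly_continuous_on_def by blast
  define h where "h = d / 2"
  have h: "0 < h" "h < d" using d by (auto simp: h_def)
  define pt where "pt i = min b (a + real i * h)" for i
  define I where "I = {i \<in> {..Suc (nat \<lceil>(b - a) / h\<rceil>)}. pt i \<in> {a..b}}"
  have "\<forall>\<^sub>F M in F. \<forall>i\<in>I. \<bar>g M (pt i) - \<phi> (pt i)\<bar> < \<epsilon> / 2"
  proof (rule eventually_ball_finite)
    show "\<forall>i\<in>I. \<forall>\<^sub>F M in F. \<bar>g M (pt i) - \<phi> (pt i)\<bar> < \<epsilon> / 2"
    proof
      fix i assume "i \<in> I"
      then have "pt i \<in> {a..b}" unfolding I_def by simp
      from tendstoD[OF conv[OF this] \<open>0 < \<epsilon> / 2\<close>]
      show "\<forall>\<^sub>F M in F. \<bar>g M (pt i) - \<phi> (pt i)\<bar> < \<epsilon> / 2" by (simp add: dist_real_def)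
    qed
  qed (simp add: I_def)
  then show ?thesis using mono
  proof eventually_elim
    case (elim M)
    show ?case
    proof
      fix s assume s: "s \<in> {a..b}"
      then have "a \<le> s" "s \<le> b" by auto
      then obtain i where i: "i \<le> nat \<lceil>(b - a) / h\<rceil>" "pt i \<in> {a..b}" "pt (Suc i) \<in> {a..b}"
        "pt i \<le> s" "s \<le> pt (Suc i)" "s - pt i < h" "pt (Suc i) - s \<le> h"
        unfolding pt_def by (rule grid_bracket[OF h(1)])
      have "\<bar>\<phi> (pt i) - \<phi> s\<bar> < \<epsilon> / 2" "\<bar>\<phi> (pt (Suc i)) - \<phi> s\<bar> < \<epsilon> / 2"
        using d(2)[OF s i(2)] d(2)[OF s i(3)] i(4-7) h by (auto simp: dist_real_def)
      moreover have "\<bar>g M (pt i) - \<phi> (pt i)\<bar> < \<epsilon> / 2" "\<bar>g M (pt (Suc i)) - \<phi> (pt (Suc i))\<bar> < \<epsilon> / 2"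
        using elim(1) i(1-3) unfolding I_def by auto
      moreover have "g M (pt i) \<le> g M s" "g M s \<le> g M (pt (Suc i))"
        using mono_onD[OF elim(2)] i(2-5) s by simp_all
      ultimately show "\<bar>g M s - \<phi> s\<bar> \<le> \<epsilon>" by linarith
    qed
  qed
qed

lemma young_powr:
  fixes a \<rho> s t :: real
  assumes a: "0 \<le> a" and \<rho>: "0 \<le> \<rho>" and s: "0 \<le> s" and t: "0 \<le> t"
  shows "a * s powr \<rho> * t \<le> \<rho> / (\<rho> + 1) * (s * (a * s powr \<rho>)) + 1 / (\<rho> + 1) * (t * (a * t powr \<rho>))"
proof (cases "s = 0 \<or> t = 0")
  case True
  then show ?thesis using a \<rho> s t by auto
next
  case False
  then have st: "0 < s" "0 < t" using s t by auto
  have "(s powr (\<rho> + 1)) powr (\<rho> / (\<rho> + 1)) * (t powr (\<rho> + 1)) powr (1 / (\<rho> + 1))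
      \<le> \<rho> / (\<rho> + 1) * s powr (\<rho> + 1) + 1 / (\<rho> + 1) * t powr (\<rho> + 1)"
    by (rule Youngs_inequality_0) (use \<rho> st in \<open>auto simp: field_simps\<close>)
  moreover have "(s powr (\<rho> + 1)) powr (\<rho> / (\<rho> + 1)) = s powr \<rho>"
    "(t powr (\<rho> + 1)) powr (1 / (\<rho> + 1)) = t"
    using \<rho> st by (simp_all add: powr_powr)
  moreover have "s powr (\<rho> + 1) = s * s powr \<rho>" "t powr (\<rho> + 1) = t * t powr \<rho>"
    using st by (simp_all add: powr_add)
  ultimately have "s powr \<rho> * t \<le> \<rho> / (\<rho> + 1) * (s * s powr \<rho>) + 1 / (\<rho> + 1) * (t * t powr \<rho>)"
    by simp
  from mult_left_mono[OF this a] show ?thesis by (simp add: algebra_simps)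
qed

lemma mult_le_of_abs_le:
  fixes u w e :: real
  assumes "\<bar>u\<bar> \<le> e" "0 \<le> w" "w \<le> 1"
  shows "u * w \<le> e"
proof -
  have "u * w \<le> \<bar>u\<bar> * w" using assms by (simp add: mult_right_mono)
  also have "\<dots> \<le> e * w" using assms by (simp add: mult_right_mono)
  also have "\<dots> \<le> e" using assms by (simp add: mult_left_le)
  finally show ?thesis .
qed

lemma young_powr_perturbed:
  fixes a \<rho> s t u v e :: real
  assumes a: "0 \<le> a" and \<rho>: "0 \<le> \<rho>" and s: "s \<in> {0..1}" and t: "t \<in> {0..1}"
    and u: "\<bar>u - a * s powr \<rho>\<bar> \<le> e" and v: "\<bar>v - a * t powr \<rho>\<bar> \<le> e"
  shows "u * t \<le> \<rho> / (\<rho> + 1) * (s * u) + 1 / (\<rho> + 1) * (t * v) + 3 * e"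
proof -
  define k1 where "k1 = \<rho> / (\<rho> + 1)"
  define k2 where "k2 = 1 / (\<rho> + 1)"
  have k: "0 \<le> k1" "k1 \<le> 1" "0 \<le> k2" "k2 \<le> 1" using \<rho> by (auto simp: k1_def k2_def field_simps)
  define A\<^sub>s where "A\<^sub>s = a * s powr \<rho>"
  define A\<^sub>t where "A\<^sub>t = a * t powr \<rho>"
  have "(u - A\<^sub>s) * t \<le> e"
    using u t unfolding A\<^sub>s_def by (intro mult_le_of_abs_le) auto
  moreover have "(A\<^sub>s - u) * (k1 * s) \<le> e"
    using u k s unfolding A\<^sub>s_def by (intro mult_le_of_abs_le) (auto simp: abs_minus_commute mult_le_one)
  moreover have "(A\<^sub>t - v) * (k2 * t) \<le> e"
    using v k t unfolding A\<^sub>t_def by (intro mult_le_of_abs_le) (auto simp: abs_minus_commute mult_le_one)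
  moreover have "A\<^sub>s * t \<le> k1 * (s * A\<^sub>s) + k2 * (t * A\<^sub>t)"
    unfolding k1_def k2_def A\<^sub>s_def A\<^sub>t_def using young_powr[OF a \<rho>] s t by auto
  ultimately show ?thesis unfolding k1_def[symmetric] k2_def[symmetric] by (simp add: algebra_simps)
qed

text \<open>On \<open>[0, \<delta>]\<close>, where \<open>G\<close> is not controlled, the terms are small because \<open>G\<close> is bounded.\<close>
lemma young_powr_approx:
  fixes G :: "real \<Rightarrow> real"
  assumes G_mono: "mono_on {0..1} G" and G_nonneg: "\<And>s. s \<in> {0..1} \<Longrightarrow> 0 \<le> G s"
    and approx: "\<And>s. s \<in> {\<delta>..1} \<Longrightarrow> \<bar>G s - a * s powr \<rho>\<bar> \<le> \<epsilon> / 8"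
    and a: "0 \<le> a" and \<rho>: "0 \<le> \<rho>" and \<delta>: "0 < \<delta>" "\<delta> \<le> 1" "(a + \<epsilon>) * \<delta> \<le> \<epsilon> / 2"
    and \<epsilon>: "0 < \<epsilon>" and s: "s \<in> {0..1}" and t: "t \<in> {0..1}"
  shows "G s * t \<le> \<rho> / (\<rho> + 1) * (s * G s) + 1 / (\<rho> + 1) * (t * G t) + \<epsilon>"
proof -
  have tail: "0 \<le> \<rho> / (\<rho> + 1) * (s * G s)" "0 \<le> 1 / (\<rho> + 1) * (t * G t)"
    using \<rho> s t G_nonneg by auto
  have G_le: "G s \<le> G \<sigma>" if "\<sigma> \<in> {0..1}" "s \<le> \<sigma>" for \<sigma> using mono_onD[OF G_mono] s that by auto
  have G_bound: "G \<sigma> \<le> a + \<epsilon>" if "\<sigma> \<in> {\<delta>..1}" for \<sigma>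
  proof -
    have "a * \<sigma> powr \<rho> \<le> a" using a \<rho> that \<delta> powr_le1[of \<rho> \<sigma>] by (simp add: mult_left_le)
    then show ?thesis using approx[OF that] \<epsilon> by linarith
  qed
  show ?thesis
  proof (cases "t < \<delta>")
    case True
    have "G s * t \<le> (a + \<epsilon>) * \<delta>"
      using G_le[of 1] G_bound[of 1] True G_nonneg[OF s] s t a \<epsilon> \<delta> by (intro mult_mono) auto
    then show ?thesis using tail \<delta>(3) \<epsilon> by linarith
  next
    case False
    then have young: "G \<sigma> * t \<le> \<rho> / (\<rho> + 1) * (\<sigma> * G \<sigma>) + 1 / (\<rho> + 1) * (t * G t) + 3 * (\<epsilon> / 8)"
      if "\<sigma> \<in> {\<delta>..1}" for \<sigma>
      using young_powr_perturbed[OF a \<rho> _ t approx[OF that] approx] that t \<delta> by auto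
    show ?thesis
    proof (cases "\<delta> \<le> s")
      case True
      then show ?thesis using young[of s] s \<epsilon> by auto
    next
      case False
      have "\<rho> / (\<rho> + 1) * (\<delta> * G \<delta>) \<le> \<delta> * G \<delta>"
        using \<rho> \<delta> G_nonneg[of \<delta>] by (intro mult_left_le_one_le) auto
      also have "\<dots> \<le> \<delta> * (a + \<epsilon>)" using G_bound[of \<delta>] \<delta> by (intro mult_left_mono) auto
      also have "\<dots> \<le> \<epsilon> / 2" using \<delta>(3) by (simp only: mult.commute)
      finally have "\<rho> / (\<rho> + 1) * (\<delta> * G \<delta>) \<le> \<epsilon> / 2" .
      moreover have "G s \<le> G \<delta>" using G_le[of \<delta>] False \<delta> by simp
      then have "G s * t \<le> G \<delta> * t" using t by (intro mult_right_mono) auto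
      ultimately show ?thesis using young[of \<delta>] tail \<delta> \<epsilon> by auto
    qed
  qed
qed

lemma eventually_young_bound:
  fixes h c :: "real \<Rightarrow> real"
  assumes h_mono: "mono_on {0..} h" and h_nonneg: "\<And>x. 0 \<le> x \<Longrightarrow> 0 \<le> h x"
    and c_pos: "\<And>x. 0 < x \<Longrightarrow> 0 < c x"
    and lim: "\<And>s. 0 < s \<Longrightarrow> ((\<lambda>M. h (M * s) / c M) \<longlongrightarrow> a * s powr \<rho>) at_top"
    and a: "0 \<le> a" and \<rho>: "0 \<le> \<rho>" and \<epsilon>: "0 < \<epsilon>"
  shows "\<forall>\<^sub>F M in at_top. \<forall>x\<in>{0..M}. \<forall>y\<in>{0..M}.
           h x * y \<le> \<rho> / (\<rho> + 1) * (x * h x) + 1 / (\<rho> + 1) * (y * h y) + \<epsilon> * (M * c M)"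
proof -
  define \<delta> where "\<delta> = min 1 (\<epsilon> / (2 * (a + \<epsilon>)))"
  have \<delta>: "0 < \<delta>" "\<delta> \<le> 1" "(a + \<epsilon>) * \<delta> \<le> \<epsilon> / 2"
    using a \<epsilon> by (auto simp: \<delta>_def min_def field_simps)
  define G where "G M s = h (M * s) / c M" for M s
  have G_mono: "mono_on {0..1} (G M)" if "0 < M" for M
    unfolding G_def using that c_pos[OF that]
    by (intro mono_onI divide_right_mono mono_onD[OF h_mono]) (auto intro: mult_left_mono)
  have "\<forall>\<^sub>F M in at_top. \<forall>s\<in>{\<delta>..1}. \<bar>G M s - a * s powr \<rho>\<bar> \<le> \<epsilon> / 8"
  proof (rule eventually_uniform_approx_of_mono)
    show "continuous_on {\<delta>..1} (\<lambda>s. a * s powr \<rho>)" using \<delta> by (intro continuous_intros) auto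
    show "\<forall>\<^sub>F M in at_top. mono_on {\<delta>..1} (G M)"
      using eventually_gt_at_top[of 0]
      by eventually_elim (rule mono_on_subset[OF G_mono], use \<delta> in auto)
  qed (use lim \<delta> \<epsilon> in \<open>auto simp: G_def\<close>)
  then show ?thesis using eventually_gt_at_top[of 0]
  proof eventually_elim
    case (elim M)
    have scale: "0 < M * c M" using elim(2) c_pos by simp
    show ?case
    proof (intro ballI)
      fix x y assume x: "x \<in> {0..M}" and y: "y \<in> {0..M}"
      have G_xy: "G M (x / M) = h x / c M" "G M (y / M) = h y / c M"
        using elim(2) unfolding G_def by simp_all
      have young: "G M (x / M) * (y / M)
          \<le> \<rho> / (\<rho> + 1) * (x / M * G M (x / M)) + 1 / (\<rho> + 1) * (y / M * G M (y / M)) + \<epsilon>"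
      proof (rule young_powr_approx[OF G_mono[OF elim(2)] _ _ a \<rho> \<delta> \<epsilon>])
        fix s :: real assume "s \<in> {0..1}"
        then show "0 \<le> G M s" unfolding G_def using elim(2) c_pos[OF elim(2)] by (simp add: h_nonneg)
      qed (use elim x y in auto)
      have distrib: "(k1 * X + k2 * Y + e) * Z = k1 * (X * Z) + k2 * (Y * Z) + e * Z" for k1 k2 X Y e Z :: real
        by (simp add: algebra_simps)
      from mult_right_mono[OF young less_imp_le[OF scale], unfolded distrib]
      have "G M (x / M) * (y / M) * (M * c M) \<le> \<rho> / (\<rho> + 1) * (x / M * G M (x / M) * (M * c M))
          + 1 / (\<rho> + 1) * (y / M * G M (y / M) * (M * c M)) + \<epsilon> * (M * c M)" .
      moreover have "x / M * G M (x / M) * (M * c M) = x * h x" "y / M * G M (y / M) * (M * c M) = y * h y"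
        "G M (x / M) * (y / M) * (M * c M) = h x * y"
        unfolding G_xy using elim(2) c_pos[OF elim(2)] by (simp_all add: field_simps)
      ultimately show "h x * y \<le> \<rho> / (\<rho> + 1) * (x * h x) + 1 / (\<rho> + 1) * (y * h y) + \<epsilon> * (M * c M)"
        by simp
    qed
  qed
qed

section \<open>Tight routing families\<close>

lemma tendsto_of_eventually_between:
  fixes g :: "'a \<Rightarrow> real"
  assumes "\<And>\<epsilon>. 0 < \<epsilon> \<Longrightarrow> \<forall>\<^sub>F x in F. l \<le> g x \<and> g x \<le> l + \<epsilon>"
  shows "(g \<longlongrightarrow> l) F"
proof (rule tendstoI)
  fix e :: real assume "0 < e"
  then have "\<forall>\<^sub>F x in F. l \<le> g x \<and> g x \<le> l + e / 2" by (intro assms) simp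
  then show "\<forall>\<^sub>F x in F. dist (g x) l < e"
    by eventually_elim (use \<open>0 < e\<close> in \<open>simp add: dist_real_def\<close>)
qed

locale tight_routing_family = routing_game E P ce + regularly_varying c
  for E :: "'e set" and P :: "'e list set" and ce :: "'e \<Rightarrow> real \<Rightarrow> real" and c :: "real \<Rightarrow> real" +
  fixes \<alpha> :: "'e \<Rightarrow> ereal"
  assumes benchmark: "\<And>e. e \<in> E \<Longrightarrow> ((\<lambda>x. ereal (ce e x / c x)) \<longlongrightarrow> \<alpha> e) at_top"
    and tight_pos: "0 < Min ((\<lambda>p. Sup (\<alpha> ` set p)) ` P)"
    and tight_finite: "Min ((\<lambda>p. Sup (\<alpha> ` set p)) ` P) < \<infinity>"
begin

lemma alpha_nonneg:
  assumes "e \<in> E"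
  shows "0 \<le> \<alpha> e"
proof (rule tendsto_lowerbound[OF benchmark[OF assms]])
  show "\<forall>\<^sub>F x in at_top. 0 \<le> ereal (ce e x / c x)"
    using eventually_gt_at_top[of 0]
    by eventually_elim (use assms in \<open>auto intro!: divide_nonneg_pos cost_nonneg c_pos\<close>)
qed simp

lemma tendsto_cost_ratio:
  assumes "e \<in> E" "\<alpha> e \<noteq> \<infinity>"
  shows "((\<lambda>x. ce e x / c x) \<longlongrightarrow> real_of_ereal (\<alpha> e)) at_top"
    and "\<alpha> e = ereal (real_of_ereal (\<alpha> e))"
proof -
  show eq: "\<alpha> e = ereal (real_of_ereal (\<alpha> e))"
    using alpha_nonneg[OF assms(1)] assms(2) by (cases "\<alpha> e") auto
  show "((\<lambda>x. ce e x / c x) \<longlongrightarrow> real_of_ereal (\<alpha> e)) at_top"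
    using benchmark[OF assms(1)] by (subst (asm) eq) (simp add: lim_ereal)
qed

lemma eventually_cost_ge:
  assumes "e \<in> E" "ereal K < \<alpha> e"
  shows "\<forall>\<^sub>F x in at_top. K * c x \<le> ce e x"
  using order_tendstoD(1)[OF benchmark[OF assms(1)] assms(2)] eventually_gt_at_top[of 0]
  by eventually_elim (simp add: c_pos pos_less_divide_eq less_imp_le)

lemma eventually_cost_le:
  assumes "e \<in> E" "\<alpha> e < ereal K"
  shows "\<forall>\<^sub>F x in at_top. ce e x \<le> K * c x"
  using order_tendstoD(2)[OF benchmark[OF assms(1)] assms(2)] eventually_gt_at_top[of 0]
  by eventually_elim (simp add: c_pos pos_divide_less_eq less_imp_le)

lemma eventually_c_scaled_ge:
  assumes "0 < s"
  shows "\<forall>\<^sub>F M in at_top. rv_limit c s / 2 * c M \<le> c (M * s)"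
proof -
  have "rv_limit c s / 2 < rv_limit c s" using rv_limit_pos[OF assms] by simp
  from order_tendstoD(1)[OF tendsto_rv_limit(1)[OF assms] this] show ?thesis
    using eventually_gt_at_top[of 0] by eventually_elim (simp add: c_pos pos_less_divide_eq less_imp_le)
qed

lemma tight_path:
  obtains q A where "q \<in> P" "0 < A" "Sup (\<alpha> ` set q) = ereal A"
    "\<And>p. p \<in> P \<Longrightarrow> ereal A \<le> Sup (\<alpha> ` set p)"
proof -
  define m where "m = Min ((\<lambda>p. Sup (\<alpha> ` set p)) ` P)"
  have "m \<in> (\<lambda>p. Sup (\<alpha> ` set p)) ` P"
    unfolding m_def using finite_P P_nonempty by (intro Min_in) auto
  then obtain q where "q \<in> P" "Sup (\<alpha> ` set q) = m" by auto
  moreover obtain A where "m = ereal A" "0 < A"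
    using tight_pos tight_finite unfolding m_def[symmetric] by (cases m) auto
  moreover have "m \<le> Sup (\<alpha> ` set p)" if "p \<in> P" for p unfolding m_def using finite_P that by auto
  ultimately show ?thesis using that by auto
qed

lemma finite_index_on_tight_path:
  assumes "q \<in> P" "Sup (\<alpha> ` set q) = ereal A" "e \<in> set q"
  shows "\<alpha> e \<noteq> \<infinity>"
  using Sup_upper[of "\<alpha> e" "\<alpha> ` set q"] assms by auto

lemma positive_finite_index_edge:
  obtains e where "e \<in> E" "\<alpha> e \<noteq> \<infinity>" "0 < real_of_ereal (\<alpha> e)"
proof -
  obtain q A where q: "q \<in> P" "0 < A" "Sup (\<alpha> ` set q) = ereal A" by (rule tight_path)
  then have "0 < Sup (\<alpha> ` set q)" by simp
  then obtain e where e: "e \<in> set q" "0 < \<alpha> e" by (auto simp: less_Sup_iff)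
  have "e \<in> E" "\<alpha> e \<noteq> \<infinity>"
    using e q paths_in_E finite_index_on_tight_path[OF q(1,3)] by auto
  moreover have "0 < real_of_ereal (\<alpha> e)" using e(2) calculation by (cases "\<alpha> e") auto
  ultimately show ?thesis using that by blast
qed

lemma rv_index:
  obtains \<rho> where "0 \<le> \<rho>" "\<And>s. 0 < s \<Longrightarrow> rv_limit c s = s powr \<rho>"
proof -
  obtain e where e: "e \<in> E" "\<alpha> e \<noteq> \<infinity>" "0 < real_of_ereal (\<alpha> e)"
    by (rule positive_finite_index_edge)
  from rv_limit_eq_powr[OF tendsto_cost_ratio(1)[OF e(1,2)] e(3) cost_mono_on[OF e(1)]] that
  show ?thesis by blast
qed

lemma eventually_c_lower_bound:
  obtains b where "0 < b" "\<forall>\<^sub>F M in at_top. b \<le> c M"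
proof -
  obtain e where e: "e \<in> E" "\<alpha> e \<noteq> \<infinity>" "0 < real_of_ereal (\<alpha> e)"
    by (rule positive_finite_index_edge)
  define r where "r = real_of_ereal (\<alpha> e)"
  have \<alpha>_e: "\<alpha> e = ereal r" "0 < r" using tendsto_cost_ratio(2)[OF e(1,2)] e(3) unfolding r_def by auto
  have "ereal (r / 2) < \<alpha> e" "\<alpha> e < ereal (2 * r)" using \<alpha>_e by auto
  note bounds = eventually_cost_ge[OF e(1) this(1)] eventually_cost_le[OF e(1) this(2)]
  have "\<forall>\<^sub>F x in at_top. r / 2 * c x \<le> ce e x \<and> 1 \<le> x"
    using bounds(1) eventually_ge_at_top[of 1] by (rule eventually_conj)
  then obtain x1 where x1: "r / 2 * c x1 \<le> ce e x1" "1 \<le> x1" using eventually_happens by force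
  moreover have "0 < r / 2 * c x1" using \<alpha>_e c_pos[of x1] x1(2) by simp
  ultimately have pos: "0 < ce e x1" by linarith
  have "\<forall>\<^sub>F M in at_top. ce e x1 / (2 * r) \<le> c M"
    using bounds(2) eventually_ge_at_top[of x1]
  proof eventually_elim
    case (elim M)
    then have "ce e x1 \<le> 2 * r * c M" using cost_mono[OF e(1), of x1 M] x1(2) by simp
    then show ?case using \<alpha>_e by (simp add: pos_divide_le_eq mult.commute)
  qed
  moreover have "0 < ce e x1 / (2 * r)" using pos \<alpha>_e by simp
  ultimately show ?thesis using that by blast
qed

lemma tight_path_cost_bound:
  obtains q K where "q \<in> P" "0 \<le> K" "\<forall>\<^sub>F M in at_top. (\<Sum>e\<in>set q. ce e M) \<le> K * c M"
proof -
  obtain q A where q: "q \<in> P" "Sup (\<alpha> ` set q) = ereal A" using tight_path by metis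
  define K where "K = (\<Sum>e\<in>set q. real_of_ereal (\<alpha> e) + 1)"
  have "0 \<le> K"
    unfolding K_def using q paths_in_E alpha_nonneg
    by (intro sum_nonneg) (metis add_nonneg_nonneg real_of_ereal_pos subsetD zero_le_one)
  moreover have "\<forall>\<^sub>F M in at_top. \<forall>e\<in>set q. ce e M \<le> (real_of_ereal (\<alpha> e) + 1) * c M"
  proof (rule eventually_ball_finite[OF finite_set], rule ballI)
    fix e assume "e \<in> set q"
    then have "e \<in> E" "\<alpha> e \<noteq> \<infinity>" using q paths_in_E finite_index_on_tight_path by auto
    moreover from this(2) have "\<alpha> e < ereal (real_of_ereal (\<alpha> e) + 1)" by (cases "\<alpha> e") auto
    ultimately show "\<forall>\<^sub>F M in at_top. ce e M \<le> (real_of_ereal (\<alpha> e) + 1) * c M"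
      by (intro eventually_cost_le)
  qed
  then have "\<forall>\<^sub>F M in at_top. (\<Sum>e\<in>set q. ce e M) \<le> K * c M"
    unfolding K_def sum_distrib_right by (auto elim!: eventually_mono intro: sum_mono)
  ultimately show ?thesis using that q(1) by blast
qed

text \<open>Edges carrying equilibrium flow cost at most a tight path; unused edges cost at most
  \<open>c\<^sub>e(0)\<close>, which is \<open>O(c(M))\<close> since \<open>c\<close> is eventually bounded below.\<close>
lemma equilibrium_cost_bounds:
  obtains K where "0 < K" "\<forall>\<^sub>F M in at_top. \<forall>f. wardrop P ce M f \<longrightarrow>
      social_cost E P ce f \<le> K * (M * c M) \<and> (\<forall>e\<in>E. ce e (load P f e) \<le> K * c M)"
proof -
  obtain q K\<^sub>q where q: "q \<in> P" and K\<^sub>q: "0 \<le> K\<^sub>q"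
    and path_bound: "\<forall>\<^sub>F M in at_top. (\<Sum>e\<in>set q. ce e M) \<le> K\<^sub>q * c M"
    by (rule tight_path_cost_bound)
  obtain b where b: "0 < b" "\<forall>\<^sub>F M in at_top. b \<le> c M" by (rule eventually_c_lower_bound)
  define Z where "Z = (\<Sum>e\<in>E. ce e 0)"
  have Z: "0 \<le> Z" "\<And>e. e \<in> E \<Longrightarrow> ce e 0 \<le> Z"
    unfolding Z_def using finite_E by (auto intro!: sum_nonneg member_le_sum cost_nonneg)
  define K where "K = Z / b + K\<^sub>q + 1"
  have "0 < K" using Z b K\<^sub>q unfolding K_def by (simp add: add_nonneg_pos)
  moreover have "\<forall>\<^sub>F M in at_top. \<forall>f. wardrop P ce M f \<longrightarrow>
      social_cost E P ce f \<le> K * (M * c M) \<and> (\<forall>e\<in>E. ce e (load P f e) \<le> K * c M)"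
    using path_bound b(2) eventually_gt_at_top[of 0]
  proof eventually_elim
    case (elim M)
    have "Z = Z / b * b" using b by simp
    also have "\<dots> \<le> Z / b * c M" using Z b elim by (intro mult_left_mono) auto
    finally have le_K: "K\<^sub>q * c M \<le> K * c M" "Z + K\<^sub>q * c M \<le> K * c M"
      using elim b Z c_pos[of M] unfolding K_def by (auto simp: algebra_simps)
    show ?case
    proof (intro allI impI conjI ballI)
      fix f assume W: "wardrop P ce M f"
      have "social_cost E P ce f \<le> M * (\<Sum>e\<in>set q. ce e M)"
        using wardrop_social_cost_le[OF W q] elim(3) by simp
      also have "\<dots> \<le> M * (K\<^sub>q * c M)" using mult_left_mono[OF elim(1), of M] elim(3) by simp
      finally have "social_cost E P ce f \<le> M * (K\<^sub>q * c M)" .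
      also have "\<dots> \<le> M * (K * c M)" using mult_left_mono[OF le_K(1), of M] elim(3) by simp
      finally show "social_cost E P ce f \<le> K * (M * c M)" by (simp add: mult.left_commute)
      fix e assume e: "e \<in> E"
      have "ce e (load P f e) \<le> Z + K\<^sub>q * c M"
      proof (cases "0 < load P f e")
        case True
        with wardrop_edge_cost_le_path_cost[OF W q e] wardrop_path_cost_le[OF W q] elim(1) Z(1)
        show ?thesis by linarith
      next
        case False
        then have "load P f e = 0" using W load_nonneg unfolding wardrop_def by (meson antisym not_less)
        moreover have "0 \<le> K\<^sub>q * c M" using K\<^sub>q c_pos[of M] elim(3) by simp
        ultimately show ?thesis using Z(2)[OF e] by simp
      qed
      then show "ce e (load P f e) \<le> K * c M" using le_K(2) by linarith
    qed
  qed
  ultimately show ?thesis using that by blast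
qed

lemma eventually_scaled_cost_ge:
  assumes "0 < s"
  shows "\<forall>\<^sub>F M in at_top. \<forall>e\<in>{e \<in> E. ereal K < \<alpha> e}. K * c (M * s) \<le> ce e (M * s)"
proof (rule eventually_ball_finite)
  show "\<forall>e\<in>{e \<in> E. ereal K < \<alpha> e}. \<forall>\<^sub>F M in at_top. K * c (M * s) \<le> ce e (M * s)"
    by (auto intro: eventually_at_top_scaled[OF assms] eventually_cost_ge)
qed (simp add: finite_E)

text \<open>Some path carries at least \<open>M / |P|\<close> and contains an edge of index above \<open>A / 2\<close>, where \<open>A\<close>
  is the tightness constant.\<close>
lemma Opt_lower_bound:
  obtains \<kappa> where "0 < \<kappa>"
    "\<forall>\<^sub>F M in at_top. \<forall>y. feasible P M y \<longrightarrow> \<kappa> * (M * c M) \<le> social_cost E P ce y"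
proof -
  obtain A where A: "0 < A" "\<And>p. p \<in> P \<Longrightarrow> ereal A \<le> Sup (\<alpha> ` set p)" by (metis tight_path)
  define s where "s = 1 / real (card P)"
  have s: "0 < s" using finite_P P_nonempty by (simp add: s_def card_gt_0_iff)
  define \<kappa> where "\<kappa> = s * (A / 2) * (rv_limit c s / 2)"
  have "0 < \<kappa>" using s A rv_limit_pos[OF s] by (simp add: \<kappa>_def)
  moreover have "\<forall>\<^sub>F M in at_top. \<forall>y. feasible P M y \<longrightarrow> \<kappa> * (M * c M) \<le> social_cost E P ce y"
    using eventually_scaled_cost_ge[OF s, of "A / 2"] eventually_c_scaled_ge[OF s] eventually_gt_at_top[of 0]
  proof eventually_elim
    case (elim M)
    show ?case
    proof (intro allI impI)
      fix y assume Y: "feasible P M y"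
      obtain p where p: "p \<in> P" "M * s \<le> y p"
        using feasible_obtains_heavy_path[OF finite_P P_nonempty Y] unfolding s_def by auto
      have "ereal (A / 2) < ereal A" using A(1) by simp
      then have "ereal (A / 2) < Sup (\<alpha> ` set p)" using A(2)[OF p(1)] by (rule less_le_trans)
      then obtain e where e: "e \<in> set p" "ereal (A / 2) < \<alpha> e" by (auto simp: less_Sup_iff)
      have "e \<in> E" using e p paths_in_E by auto
      have Ms: "0 \<le> M * s" "M * s \<le> load P y e"
        using elim s path_flow_le_load[OF finite_P Y p(1) e(1)] p(2) by auto
      have "\<kappa> * (M * c M) = (M * s * (A / 2)) * (rv_limit c s / 2 * c M)" by (simp add: \<kappa>_def)
      also have "\<dots> \<le> (M * s * (A / 2)) * c (M * s)"
        using elim(2) Ms A by (intro mult_left_mono) auto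
      also have "\<dots> = (M * s) * (A / 2 * c (M * s))" by simp
      also have "\<dots> \<le> (M * s) * ce e (M * s)"
        using elim(1) \<open>e \<in> E\<close> e(2) Ms by (intro mult_left_mono) auto
      also have "\<dots> \<le> load P y e * ce e (load P y e)"
        using Ms cost_nonneg \<open>e \<in> E\<close> by (intro mult_mono cost_mono) auto
      also have "\<dots> \<le> social_cost E P ce y"
        by (rule edge_cost_le_social_cost[OF finite_E Y cost_nonneg \<open>e \<in> E\<close>])
      finally show "\<kappa> * (M * c M) \<le> social_cost E P ce y" .
    qed
  qed
  ultimately show ?thesis using that by blast
qed

text \<open>Regular variation gives \<open>c(M\<delta>) \<ge> const \<cdot> c(M)\<close>, while \<open>\<alpha>\<^sub>e = \<infinity>\<close> makes
  \<open>c\<^sub>e(M\<delta>) / c(M\<delta>)\<close> arbitrarily large.\<close>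
lemma infinite_index_heavy_load:
  assumes K: "0 \<le> K" and \<delta>: "0 < \<delta>"
  shows "\<forall>\<^sub>F M in at_top. \<forall>y e. feasible P M y \<longrightarrow> e \<in> E \<longrightarrow> \<alpha> e = \<infinity> \<longrightarrow> M * \<delta> < load P y e
           \<longrightarrow> K * (M * c M) \<le> social_cost E P ce y"
proof -
  define L where "L = rv_limit c \<delta> / 2"
  have L: "0 < L" using rv_limit_pos[OF \<delta>] by (simp add: L_def)
  define K' where "K' = K / (\<delta> * L)"
  show ?thesis
    using eventually_scaled_cost_ge[OF \<delta>, of K'] eventually_c_scaled_ge[OF \<delta>, folded L_def] eventually_gt_at_top[of 0]
  proof eventually_elim
    case (elim M)
    show ?case
    proof (intro allI impI)
      fix y e assume Y: "feasible P M y" and e: "e \<in> E" "\<alpha> e = \<infinity>" "M * \<delta> < load P y e"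
      have M\<delta>: "0 \<le> M * \<delta>" using elim \<delta> by simp
      have K': "0 \<le> K'" using K \<delta> L by (simp add: K'_def)
      have "K * (M * c M) = (M * \<delta> * K') * (L * c M)" using \<delta> L by (simp add: K'_def field_simps)
      also have "\<dots> \<le> (M * \<delta> * K') * c (M * \<delta>)"
        using elim(2) M\<delta> K' by (intro mult_left_mono) auto
      also have "\<dots> \<le> (M * \<delta>) * ce e (M * \<delta>)"
        using elim(1) e M\<delta> mult_left_mono[of "K' * c (M * \<delta>)" "ce e (M * \<delta>)" "M * \<delta>"]
        by (simp add: mult.assoc)
      also have "\<dots> \<le> load P y e * ce e (load P y e)"
        using e M\<delta> cost_nonneg by (intro mult_mono cost_mono) auto
      also have "\<dots> \<le> social_cost E P ce y" by (rule edge_cost_le_social_cost[OF finite_E Y cost_nonneg e(1)])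
      finally show "K * (M * c M) \<le> social_cost E P ce y" .
    qed
  qed
qed

lemma eventually_finite_index_young:
  assumes \<rho>: "0 \<le> \<rho>" "\<And>s. 0 < s \<Longrightarrow> rv_limit c s = s powr \<rho>" and \<epsilon>: "0 < \<epsilon>"
  shows "\<forall>\<^sub>F M in at_top. \<forall>e\<in>{e \<in> E. \<alpha> e \<noteq> \<infinity>}. \<forall>x\<in>{0..M}. \<forall>z\<in>{0..M}.
      ce e x * z \<le> \<rho> / (\<rho> + 1) * (x * ce e x) + 1 / (\<rho> + 1) * (z * ce e z) + \<epsilon> * (M * c M)"
proof (rule eventually_ball_finite, use finite_E in simp, intro ballI)
  fix e assume e: "e \<in> {e \<in> E. \<alpha> e \<noteq> \<infinity>}"
  then have "((\<lambda>M. ce e (M * s) / c M) \<longlongrightarrow> real_of_ereal (\<alpha> e) * s powr \<rho>) at_top" if "0 < s" for s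
    using tendsto_scaled_ratio[OF tendsto_cost_ratio(1) that] \<rho>(2)[OF that] by simp
  moreover have "0 \<le> real_of_ereal (\<alpha> e)" using alpha_nonneg e by (simp add: real_of_ereal_pos)
  ultimately show "\<forall>\<^sub>F M in at_top. \<forall>x\<in>{0..M}. \<forall>z\<in>{0..M}.
      ce e x * z \<le> \<rho> / (\<rho> + 1) * (x * ce e x) + 1 / (\<rho> + 1) * (z * ce e z) + \<epsilon> * (M * c M)"
    using e by (intro eventually_young_bound cost_mono_on cost_nonneg c_pos \<rho>(1) \<epsilon>) auto
qed

text \<open>On an edge of infinite index that \<open>y\<close> loads lightly, the left side is at most
  \<open>K c(M) \<cdot> M\<delta>\<close> by the equilibrium cost bound.\<close>
lemma eventually_edge_young:
  assumes \<rho>: "0 \<le> \<rho>" "\<And>s. 0 < s \<Longrightarrow> rv_limit c s = s powr \<rho>" and \<epsilon>: "0 < \<epsilon>"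
  obtains \<delta> where "0 < \<delta>"
    "\<forall>\<^sub>F M in at_top. \<forall>f y. wardrop P ce M f \<longrightarrow> feasible P M y \<longrightarrow> (\<forall>e\<in>E.
       (\<alpha> e = \<infinity> \<longrightarrow> load P y e \<le> M * \<delta>) \<longrightarrow>
       ce e (load P f e) * load P y e \<le> \<rho> / (\<rho> + 1) * (load P f e * ce e (load P f e))
         + 1 / (\<rho> + 1) * (load P y e * ce e (load P y e)) + \<epsilon> * (M * c M))"
proof -
  obtain K where K: "0 < K" "\<forall>\<^sub>F M in at_top. \<forall>f. wardrop P ce M f \<longrightarrow>
      social_cost E P ce f \<le> K * (M * c M) \<and> (\<forall>e\<in>E. ce e (load P f e) \<le> K * c M)"
    by (rule equilibrium_cost_bounds)
  define \<delta> where "\<delta> = \<epsilon> / K"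
  have "\<forall>\<^sub>F M in at_top. \<forall>e\<in>{e \<in> E. \<alpha> e \<noteq> \<infinity>}. \<forall>x\<in>{0..M}. \<forall>z\<in>{0..M}.
      ce e x * z \<le> \<rho> / (\<rho> + 1) * (x * ce e x) + 1 / (\<rho> + 1) * (z * ce e z) + \<epsilon> * (M * c M)"
    using \<rho> \<epsilon> by (rule eventually_finite_index_young)
  then have "\<forall>\<^sub>F M in at_top. \<forall>f y. wardrop P ce M f \<longrightarrow> feasible P M y \<longrightarrow> (\<forall>e\<in>E.
       (\<alpha> e = \<infinity> \<longrightarrow> load P y e \<le> M * \<delta>) \<longrightarrow>
       ce e (load P f e) * load P y e \<le> \<rho> / (\<rho> + 1) * (load P f e * ce e (load P f e))
         + 1 / (\<rho> + 1) * (load P y e * ce e (load P y e)) + \<epsilon> * (M * c M))"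
    using K(2) eventually_gt_at_top[of 0]
  proof eventually_elim
    case (elim M)
    show ?case
    proof (intro allI impI ballI)
      fix f y e assume W: "wardrop P ce M f" and Y: "feasible P M y" and e: "e \<in> E"
        and light: "\<alpha> e = \<infinity> \<longrightarrow> load P y e \<le> M * \<delta>"
      let ?x = "load P f e" and ?z = "load P y e"
      have F: "feasible P M f" using W unfolding wardrop_def by simp
      have xz: "?x \<in> {0..M}" "?z \<in> {0..M}"
        using load_nonneg F Y load_le_demand[OF finite_P] by auto
      have tail: "0 \<le> \<rho> / (\<rho> + 1) * (?x * ce e ?x)" "0 \<le> 1 / (\<rho> + 1) * (?z * ce e ?z)"
        using \<rho>(1) xz cost_nonneg[OF e] by auto
      show "ce e ?x * ?z \<le> \<rho> / (\<rho> + 1) * (?x * ce e ?x) + 1 / (\<rho> + 1) * (?z * ce e ?z) + \<epsilon> * (M * c M)"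
      proof (cases "\<alpha> e = \<infinity>")
        case False
        then show ?thesis using elim(1) e xz by blast
      next
        case True
        have "ce e ?x * ?z \<le> (K * c M) * (M * \<delta>)"
          using elim W e light True xz cost_nonneg[OF e] K(1) c_pos[of M] by (intro mult_mono) auto
        also have "\<dots> = \<epsilon> * (M * c M)" using K(1) by (simp add: \<delta>_def)
        finally show ?thesis using tail by linarith
      qed
    qed
  qed
  moreover have "0 < \<delta>" using \<epsilon> K(1) by (simp add: \<delta>_def)
  ultimately show ?thesis using that by blast
qed

text \<open>Either \<open>y\<close> puts a fixed fraction of the demand on an edge of infinite index, and is then
  already costlier than the equilibrium, or the Young-type bound holds on every edge.\<close>
lemma eventually_near_optimal:
  assumes \<eta>: "0 < \<eta>"
  shows "\<forall>\<^sub>F M in at_top. \<forall>f y. wardrop P ce M f \<longrightarrow> feasible P M y \<longrightarrow>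
           social_cost E P ce f \<le> social_cost E P ce y + \<eta> * (M * c M)"
proof -
  obtain \<rho> where \<rho>: "0 \<le> \<rho>" "\<And>s. 0 < s \<Longrightarrow> rv_limit c s = s powr \<rho>" using rv_index by blast
  define \<epsilon> where "\<epsilon> = \<eta> / ((\<rho> + 1) * (real (card E) + 1))"
  have \<rho>1: "0 < \<rho> + 1" using \<rho>(1) by simp
  have \<epsilon>_pos: "0 < \<epsilon>" unfolding \<epsilon>_def using \<eta> \<rho>1 by simp
  have "(\<rho> + 1) * (real (card E) * \<epsilon>) \<le> (\<rho> + 1) * ((real (card E) + 1) * \<epsilon>)"
    using \<rho>1 \<epsilon>_pos by (intro mult_left_mono mult_right_mono) auto
  also have "\<dots> = \<eta>" using \<rho>1 unfolding \<epsilon>_def by simp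
  finally have \<epsilon>: "0 < \<epsilon>" "(\<rho> + 1) * (real (card E) * \<epsilon>) \<le> \<eta>" using \<epsilon>_pos by auto
  obtain \<delta> where \<delta>: "0 < \<delta>" and young: "\<forall>\<^sub>F M in at_top. \<forall>f y. wardrop P ce M f \<longrightarrow> feasible P M y \<longrightarrow>
      (\<forall>e\<in>E. (\<alpha> e = \<infinity> \<longrightarrow> load P y e \<le> M * \<delta>) \<longrightarrow>
       ce e (load P f e) * load P y e \<le> \<rho> / (\<rho> + 1) * (load P f e * ce e (load P f e))
         + 1 / (\<rho> + 1) * (load P y e * ce e (load P y e)) + \<epsilon> * (M * c M))"
    by (rule eventually_edge_young[OF \<rho> \<epsilon>(1)])
  obtain K where K: "0 < K" "\<forall>\<^sub>F M in at_top. \<forall>f. wardrop P ce M f \<longrightarrow>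
      social_cost E P ce f \<le> K * (M * c M) \<and> (\<forall>e\<in>E. ce e (load P f e) \<le> K * c M)"
    by (rule equilibrium_cost_bounds)
  show ?thesis
    using young K(2) infinite_index_heavy_load[OF less_imp_le[OF K(1)] \<delta>] eventually_gt_at_top[of 0]
  proof eventually_elim
    case (elim M)
    have McM: "0 < M * c M" using elim(4) c_pos by simp
    show ?case
    proof (intro allI impI)
      fix f y assume W: "wardrop P ce M f" and Y: "feasible P M y"
      show "social_cost E P ce f \<le> social_cost E P ce y + \<eta> * (M * c M)"
      proof (cases "\<exists>e\<in>E. \<alpha> e = \<infinity> \<and> M * \<delta> < load P y e")
        case True
        then have "social_cost E P ce f \<le> social_cost E P ce y" using elim(2,3) W Y by force
        moreover have "0 \<le> \<eta> * (M * c M)" using \<eta> McM by simp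
        ultimately show ?thesis by linarith
      next
        case False
        then have "social_cost E P ce f \<le> social_cost E P ce y + (\<rho> + 1) * (real (card E) * (\<epsilon> * (M * c M)))"
          using elim(1) W Y by (intro social_cost_le_of_edge_young[OF W Y \<rho>(1)]) (auto simp: not_less)
        moreover have "(\<rho> + 1) * (real (card E) * (\<epsilon> * (M * c M))) \<le> \<eta> * (M * c M)"
          using mult_right_mono[OF \<epsilon>(2) less_imp_le[OF McM]] by (simp add: mult.assoc)
        ultimately show ?thesis by linarith
      qed
    qed
  qed
qed

theorem PoA_tendsto_1: "((\<lambda>M. PoA E P ce M) \<longlongrightarrow> 1) at_top"
proof (rule tendsto_of_eventually_between)
  fix \<epsilon> :: real assume \<epsilon>: "0 < \<epsilon>"
  obtain \<kappa> where \<kappa>: "0 < \<kappa>"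
    "\<forall>\<^sub>F M in at_top. \<forall>y. feasible P M y \<longrightarrow> \<kappa> * (M * c M) \<le> social_cost E P ce y"
    by (rule Opt_lower_bound)
  have \<epsilon>\<kappa>: "0 < \<epsilon> * \<kappa>" using \<epsilon> \<kappa>(1) by simp
  show "\<forall>\<^sub>F M in at_top. 1 \<le> PoA E P ce M \<and> PoA E P ce M \<le> 1 + \<epsilon>"
    using \<kappa>(2) eventually_near_optimal[OF \<epsilon>\<kappa>] eventually_gt_at_top[of 0]
  proof eventually_elim
    case (elim M)
    have "0 < \<kappa> * (M * c M)" using \<kappa>(1) elim(3) c_pos by simp
    from PoA_bounds[OF _ this less_imp_le[OF \<epsilon>]] elim show ?case
      by (simp add: mult.assoc)
  qed
qed

end

theorem theorem4p6:
  fixes E :: "'e set" and src trg :: "'e \<Rightarrow> 'v" and orig dest :: 'v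
    and P :: "'e list set" and ce :: "'e \<Rightarrow> real \<Rightarrow> real"
    and c :: "real \<Rightarrow> real" and alpha :: "'e \<Rightarrow> ereal"
  assumes "finite E"
    and "finite P" and "P \<noteq> {}"
    and "\<forall>p\<in>P. simple_path E src trg orig dest p"
    and "\<forall>e\<in>E. continuous_on {0..} (ce e) \<and> mono_on {0..} (ce e) \<and> (\<forall>x\<ge>0. 0 \<le> ce e x)"
    and "\<forall>x>0. 0 < c x"
    and "regularly_varying_at_top c"
    and "\<forall>e\<in>E. ((\<lambda>x. ereal (ce e x / c x)) \<longlongrightarrow> alpha e) at_top"
    and "0 < Min ((\<lambda>p. Sup (alpha ` set p)) ` P)"
    and "Min ((\<lambda>p. Sup (alpha ` set p)) ` P) < \<infinity>"
  shows "((\<lambda>M. PoA E P ce M) \<longlongrightarrow> 1) at_top"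
proof -
  interpret tight_routing_family E P ce c alpha
    by unfold_locales (use assms in \<open>auto simp: simple_path_def\<close>)
  show ?thesis by (rule PoA_tendsto_1)
qed

end
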